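(* For any group $B$ and any integer $p\ge 2$, $$cw(B\wr C_p)\le\max(1,cw(B)).$$
   Context: $B\wr C_p=B^p\rtimes C_p$ is the wreath product with $C_p$ acting on $\{1,\dots,p\}$ by cyclic shifts. The commutator width $cw(G)$ of a group $G$ is the least $n$ such that every element of the derived subgroup $G'$ is a product of at most $n$ commutators $[x,y]=xyx^{-1}y^{-1}$ ($cw(G)=\infty$ if no such $n$ exists). *)

theory Defs
  imports "HOL-Algebra.Generated_Groups" "HOL-Library.FuncSet" "HOL-Library.Extended_Nat"
begin

definition commutator :: "('a, 'b) monoid_scheme \<Rightarrow> 'a \<Rightarrow> 'a \<Rightarrow> 'a" where
  "commutator G x y = x \<otimes>\<^bsub>G\<^esub> y \<otimes>\<^bsub>G\<^esub> inv\<^bsub>G\<^esub> x \<otimes>\<^bsub>G\<^esub> inv\<^bsub>G\<^esub> y"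

definition comm_prod :: "('a, 'b) monoid_scheme \<Rightarrow> ('a \<times> 'a) list \<Rightarrow> 'a" where
  "comm_prod G cs = foldr (\<lambda>(x, y) acc. commutator G x y \<otimes>\<^bsub>G\<^esub> acc) cs \<one>\<^bsub>G\<^esub>"

definition prod_of_comms :: "('a, 'b) monoid_scheme \<Rightarrow> nat \<Rightarrow> 'a \<Rightarrow> bool" where
  "prod_of_comms G n g \<longleftrightarrow>
     (\<exists>cs. length cs \<le> n \<and> set cs \<subseteq> carrier G \<times> carrier G \<and> g = comm_prod G cs)"

text \<open>Commutator width; infinity if no bound exists. The derived subgroup G' is
  the library's derived G (carrier G), the subgroup generated by all commutators.\<close>
definition comm_width :: "('a, 'b) monoid_scheme \<Rightarrow> enat" where
  "comm_width G = Inf {enat n | n. \<forall>g \<in> derived G (carrier G). prod_of_comms G n g}"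

text \<open>Elements (f, i) with f : {0..<p} \<rightarrow> B
  (extensional) and i \<in> Z/p; C_p acts by cyclic shift of coordinates:
  (i . g)(k) = g(k - i mod p).  (f,i)(g,j) = (f \<cdot> (i . g), i + j mod p).\<close>
definition wreath_mult :: "('a, 'b) monoid_scheme \<Rightarrow> nat \<Rightarrow>
    (nat \<Rightarrow> 'a) \<times> nat \<Rightarrow> (nat \<Rightarrow> 'a) \<times> nat \<Rightarrow> (nat \<Rightarrow> 'a) \<times> nat" where
  "wreath_mult B p x y =
     ((\<lambda>k. if k < p then fst x k \<otimes>\<^bsub>B\<^esub> fst y ((k + p - snd x) mod p) else undefined),
      (snd x + snd y) mod p)"

definition wreath_Cp :: "('a, 'b) monoid_scheme \<Rightarrow> nat \<Rightarrow> ((nat \<Rightarrow> 'a) \<times> nat) monoid" where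
  "wreath_Cp B p =
    \<lparr> carrier = ({0..<p} \<rightarrow>\<^sub>E carrier B) \<times> {0..<p},
      mult = wreath_mult B p,
      one = ((\<lambda>k. if k < p then \<one>\<^bsub>B\<^esub> else undefined), 0) \<rparr>"

end

theory Submission
  imports Defs "HOL-Algebra.FiniteProduct" "HOL-Algebra.Elementary_Groups"
begin

text \<open>
  Both the projection of W = B wr C_p onto C_p and the map (f, i) |-> prod_k f_k B' into the
  abelianisation of B are homomorphisms to abelian groups, so every element of W' is a base
  element (f, 0) whose ordered coordinate product f_0 ... f_(p-1) lies in B'.

  A base element (h, 0) whose coordinate product is a single commutator [a, b] is itself a
  single commutator [(u, 1), (v, 0)] of W: take u = (a, 1, ..., 1) and let v solve the
  telescoping system v_(k-1) v_k^-1 = h_k for 0 < k, a v_(p-1) a^-1 v_0^-1 = h_0.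

  So if f_0 ... f_(p-1) = [a, b] c with c a product of n - 1 commutators, moving c out of the
  last coordinate writes (f, 0) = (h, 0) e(c), where e embeds B into the last coordinate; this
  is a product of 1 + (n - 1) commutators.
\<close>

lemma (in group) commutator_closed [intro, simp]:
  "x \<in> carrier G \<Longrightarrow> y \<in> carrier G \<Longrightarrow> commutator G x y \<in> carrier G"
  by (simp add: commutator_def)

lemma (in group) mult_inv_cancel_left:
  "x \<in> carrier G \<Longrightarrow> y \<in> carrier G \<Longrightarrow> x \<otimes> (inv x \<otimes> y) = y"
  by (simp add: m_assoc[symmetric])

lemma (in comm_group) commutator_eq_one:
  "x \<in> carrier G \<Longrightarrow> y \<in> carrier G \<Longrightarrow> commutator G x y = \<one>"
  by (simp add: commutator_def m_lcomm[of y "inv x"] m_assoc)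

lemma (in group_hom) hom_commutator:
  "x \<in> carrier G \<Longrightarrow> y \<in> carrier G \<Longrightarrow> h (commutator G x y) = commutator H (h x) (h y)"
  by (simp add: commutator_def)

lemma comm_prod_Nil [simp]: "comm_prod G [] = \<one>\<^bsub>G\<^esub>"
  by (simp add: comm_prod_def)

lemma comm_prod_Cons [simp]: "comm_prod G ((x, y) # cs) = commutator G x y \<otimes>\<^bsub>G\<^esub> comm_prod G cs"
  by (simp add: comm_prod_def)

lemma (in group) comm_prod_closed:
  "set cs \<subseteq> carrier G \<times> carrier G \<Longrightarrow> comm_prod G cs \<in> carrier G"
  by (induction cs) auto

lemma (in group_hom) hom_comm_prod:
  "set cs \<subseteq> carrier G \<times> carrier G \<Longrightarrow> h (comm_prod G cs) = comm_prod H (map (map_prod h h) cs)"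
  by (induction cs) (auto simp: hom_commutator G.comm_prod_closed)

lemma prod_of_comms_mono: "prod_of_comms G m x \<Longrightarrow> m \<le> n \<Longrightarrow> prod_of_comms G n x"
  unfolding prod_of_comms_def using le_trans by blast

lemma prod_of_comms_commutator_mult:
  assumes "prod_of_comms G n x" "a \<in> carrier G" "b \<in> carrier G"
  shows "prod_of_comms G (Suc n) (commutator G a b \<otimes>\<^bsub>G\<^esub> x)"
proof -
  obtain cs where "length cs \<le> n" "set cs \<subseteq> carrier G \<times> carrier G" "x = comm_prod G cs"
    using assms(1) by (auto simp: prod_of_comms_def)
  then show ?thesis
    using assms(2,3) unfolding prod_of_comms_def by (intro exI[of _ "(a, b) # cs"]) auto
qed

lemma (in group_hom) prod_of_comms_image:
  assumes "prod_of_comms G n x"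
  shows "prod_of_comms H n (h x)"
proof -
  obtain cs where "length cs \<le> n" "set cs \<subseteq> carrier G \<times> carrier G" "x = comm_prod G cs"
    using assms by (auto simp: prod_of_comms_def)
  then show ?thesis
    unfolding prod_of_comms_def by (intro exI[of _ "map (map_prod h h) cs"]) (auto simp: hom_comm_prod)
qed

lemma (in group) prod_of_comms_split:
  assumes "prod_of_comms G n x"
  obtains a b c where "a \<in> carrier G" "b \<in> carrier G" "prod_of_comms G (n - 1) c"
    "x = commutator G a b \<otimes> c"
proof -
  obtain cs where cs: "length cs \<le> n" "set cs \<subseteq> carrier G \<times> carrier G" "x = comm_prod G cs"
    using assms by (auto simp: prod_of_comms_def)
  show ?thesis
  proof (cases cs)
    case Nil
    have "prod_of_comms G (n - 1) \<one>"
      unfolding prod_of_comms_def by (intro exI[of _ "[]"]) simp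
    then show ?thesis
      using cs Nil by (intro that[of \<one> \<one> \<one>]) (auto simp: commutator_def)
  next
    case (Cons ab cs')
    have "prod_of_comms G (n - 1) (comm_prod G cs')"
      using cs Cons unfolding prod_of_comms_def by (intro exI[of _ cs']) auto
    then show ?thesis
      using cs Cons by (intro that[of "fst ab" "snd ab" "comm_prod G cs'"]) auto
  qed
qed

lemma comm_width_le_enat_iff:
  "comm_width G \<le> enat n \<longleftrightarrow> (\<forall>g \<in> derived G (carrier G). prod_of_comms G n g)"
proof
  let ?A = "{enat m | m. \<forall>g \<in> derived G (carrier G). prod_of_comms G m g}"
  assume le: "comm_width G \<le> enat n"
  have cw: "comm_width G = Inf ?A"
    by (simp add: comm_width_def)
  have "?A \<noteq> {}"
  proof
    assume "?A = {}"
    then have "comm_width G = \<infinity>"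
      using cw by (metis Inf_empty top_enat_def)
    with le show False
      by simp
  qed
  then obtain x where "x \<in> ?A"
    by blast
  then have "(LEAST y. y \<in> ?A) \<in> ?A"
    by (rule LeastI)
  then have "Inf ?A \<in> ?A"
    unfolding Inf_enat_def using \<open>?A \<noteq> {}\<close> by (simp only: if_False)
  then obtain m where "Inf ?A = enat m" and m: "\<forall>g \<in> derived G (carrier G). prod_of_comms G m g"
    by blast
  with le cw have "m \<le> n"
    by simp
  with m show "\<forall>g \<in> derived G (carrier G). prod_of_comms G n g"
    by (auto intro: prod_of_comms_mono)
next
  assume "\<forall>g \<in> derived G (carrier G). prod_of_comms G n g"
  then show "comm_width G \<le> enat n"
    unfolding comm_width_def by (auto intro: Inf_lower)
qed

lemma derived_subset_kernel:
  assumes "group G" "comm_group A" "\<phi> \<in> hom G A"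
  shows "derived G (carrier G) \<subseteq> kernel G A \<phi>"
proof -
  interpret group_hom G A \<phi>
    using assms by (simp add: group_hom_def group_hom_axioms_def comm_group.axioms(2))
  have "\<phi> (commutator G x y) = \<one>\<^bsub>A\<^esub>" if "x \<in> carrier G" "y \<in> carrier G" for x y
    using that hom_commutator comm_group.commutator_eq_one[OF assms(2)] by simp
  then have "derived_set G (carrier G) \<subseteq> kernel G A \<phi>"
    by (auto simp: kernel_def commutator_def)
  then show ?thesis
    unfolding derived_def by (rule G.generate_subgroup_incl[OF _ subgroup_kernel])
qed

primrec ordered_prod :: "('a, 'b) monoid_scheme \<Rightarrow> (nat \<Rightarrow> 'a) \<Rightarrow> nat \<Rightarrow> 'a" where
  "ordered_prod G f 0 = \<one>\<^bsub>G\<^esub>"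
| "ordered_prod G f (Suc n) = ordered_prod G f n \<otimes>\<^bsub>G\<^esub> f n"

context group
begin

lemma ordered_prod_closed [intro, simp]:
  "f \<in> {..<n} \<rightarrow> carrier G \<Longrightarrow> ordered_prod G f n \<in> carrier G"
  by (induction n) (auto simp: Pi_iff)

lemma ordered_prod_cong:
  "(\<And>k. k < n \<Longrightarrow> f k = g k) \<Longrightarrow> ordered_prod G f n = ordered_prod G g n"
  by (induction n) auto

lemma ordered_prod_Suc_shift:
  "f \<in> {..n} \<rightarrow> carrier G \<Longrightarrow> ordered_prod G f (Suc n) = f 0 \<otimes> ordered_prod G (\<lambda>k. f (Suc k)) n"
  by (induction n) (auto simp: m_assoc Pi_iff)

lemma ordered_prod_update_last:
  assumes "f \<in> {..n} \<rightarrow> carrier G" "x \<in> carrier G"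
  shows "ordered_prod G (f(n := f n \<otimes> x)) (Suc n) = ordered_prod G f (Suc n) \<otimes> x"
proof -
  have "ordered_prod G (f(n := f n \<otimes> x)) n = ordered_prod G f n"
    by (rule ordered_prod_cong) simp
  then show ?thesis
    using assms by (simp add: m_assoc Pi_iff)
qed

end

lemma (in group_hom) ordered_prod_hom_finprod:
  assumes "comm_group H" "f \<in> {..<n} \<rightarrow> carrier G"
  shows "h (ordered_prod G f n) = finprod H (h \<circ> f) {..<n}"
proof -
  interpret A: comm_group H
    by (fact assms(1))
  show ?thesis
    using assms(2) by (induction n) (auto simp: lessThan_Suc A.m_comm Pi_iff)
qed

lemma (in group) cyclic_commutator_system_solvable:
  assumes n: "0 < n" and h: "h \<in> {..<n} \<rightarrow> carrier G" and a: "a \<in> carrier G" and b: "b \<in> carrier G"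
    and prod_h: "ordered_prod G h n = commutator G a b"
  obtains v where "v \<in> {..<n} \<rightarrow> carrier G"
    and "a \<otimes> v (n - 1) \<otimes> inv a \<otimes> inv (v 0) = h 0"
    and "\<And>k. 0 < k \<Longrightarrow> k < n \<Longrightarrow> v (k - 1) \<otimes> inv (v k) = h k"
proof -
  define R where "R k = ordered_prod G (\<lambda>j. h (Suc j)) k" for k
  define c where "c = R (n - 1) \<otimes> b"
  define v where "v k = inv (R k) \<otimes> c" for k
  have R: "R k \<in> carrier G" if "k < n" for k
    using h that unfolding R_def by (intro ordered_prod_closed) auto
  then have c: "c \<in> carrier G"
    using n b by (simp add: c_def)
  have "v \<in> {..<n} \<rightarrow> carrier G"
    using R c by (simp add: v_def)
  moreover have "a \<otimes> v (n - 1) \<otimes> inv a \<otimes> inv (v 0) = h 0"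
  proof -
    have "v (n - 1) = b" "v 0 = c"
      using R b c n by (simp_all add: v_def c_def R_def m_assoc[symmetric])
    then have "a \<otimes> v (n - 1) \<otimes> inv a \<otimes> inv (v 0) = commutator G a b \<otimes> inv (R (n - 1))"
      using a b R n by (simp add: c_def commutator_def inv_mult_group m_assoc)
    also have "commutator G a b = h 0 \<otimes> R (n - 1)"
      using ordered_prod_Suc_shift[of h "n - 1"] h n prod_h by (simp add: R_def Pi_iff)
    finally show ?thesis
      using h n R by (simp add: m_assoc Pi_iff)
  qed
  moreover have "v (k - 1) \<otimes> inv (v k) = h k" if "0 < k" "k < n" for k
  proof -
    have "R k = R (k - 1) \<otimes> h k"
      using that by (cases k) (simp_all add: R_def)
    then show ?thesis
      using that R[of k] R[of "k - 1"] h c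
      by (simp add: v_def inv_mult_group m_assoc inv_solve_left' mult_inv_cancel_left Pi_iff)
  qed
  ultimately show ?thesis
    using that by blast
qed

locale wreath = group B for B :: "('a, 'b) monoid_scheme" (structure) +
  fixes p :: nat
  assumes p_pos: "0 < p"
begin

abbreviation W where "W \<equiv> wreath_Cp B p"

definition rot :: "nat \<Rightarrow> nat \<Rightarrow> nat" where
  "rot i k = (k + p - i) mod p"

lemma rot_lt [simp]: "rot i k < p"
  using p_pos by (simp add: rot_def)

lemma rot_eq: "i < p \<Longrightarrow> k < p \<Longrightarrow> rot i k = (if i \<le> k then k - i else k + p - i)"
  by (auto simp: rot_def mod_if)

lemma rot_0 [simp]: "k < p \<Longrightarrow> rot 0 k = k"
  by (simp add: rot_def)

lemma rot_rot: "i < p \<Longrightarrow> j < p \<Longrightarrow> k < p \<Longrightarrow> rot j (rot i k) = rot ((i + j) mod p) k"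
  by (auto simp: rot_eq mod_if)

lemma rot_one:
  assumes "k < p"
  shows "rot (1 mod p) k = (if k = 0 then p - 1 else k - 1)"
proof (cases "p = 1")
  case True
  then have "1 mod p = 0" "k = 0" "p - 1 = 0"
    using assms by auto
  then show ?thesis
    using assms by (simp only: rot_0) simp
next
  case False
  then show ?thesis
    using assms p_pos by (auto simp: rot_eq)
qed

lemma rot_inverse: "i < p \<Longrightarrow> k < p \<Longrightarrow> rot ((p - i) mod p) (rot i k) = k"
  by (simp add: rot_rot mod_add_right_eq)

lemma bij_betw_rot: "i < p \<Longrightarrow> bij_betw (rot i) {..<p} {..<p}"
proof (rule bij_betw_byWitness[where f' = "rot ((p - i) mod p)"])
  assume i: "i < p"
  have "(p - (p - i) mod p) mod p = i"
    using i by (cases "i = 0") auto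
  then show "\<forall>k \<in> {..<p}. rot i (rot ((p - i) mod p) k) = k"
    using rot_inverse[of "(p - i) mod p"] p_pos by simp
qed (auto simp: rot_inverse)

lemma mem_carrier_W:
  "(f, i) \<in> carrier W \<longleftrightarrow> (\<forall>k<p. f k \<in> carrier B) \<and> (\<forall>k\<ge>p. f k = undefined) \<and> i < p"
  by (auto simp: wreath_Cp_def PiE_def Pi_def extensional_def)

lemma mult_W:
  "(f, i) \<otimes>\<^bsub>W\<^esub> (g, j) = (\<lambda>k. if k < p then f k \<otimes> g (rot i k) else undefined, (i + j) mod p)"
  by (simp add: wreath_Cp_def wreath_mult_def rot_def fun_eq_iff)

lemma one_W: "\<one>\<^bsub>W\<^esub> = (\<lambda>k. if k < p then \<one> else undefined, 0)"
  by (simp add: wreath_Cp_def)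

definition inv_W :: "(nat \<Rightarrow> 'a) \<times> nat \<Rightarrow> (nat \<Rightarrow> 'a) \<times> nat" where
  "inv_W x = (\<lambda>k. if k < p then inv (fst x (rot ((p - snd x) mod p) k)) else undefined, (p - snd x) mod p)"

lemma inv_W_closed: "x \<in> carrier W \<Longrightarrow> inv_W x \<in> carrier W"
  using p_pos by (cases x) (auto simp: mem_carrier_W inv_W_def)

lemma inv_W_l_inv: "x \<in> carrier W \<Longrightarrow> inv_W x \<otimes>\<^bsub>W\<^esub> x = \<one>\<^bsub>W\<^esub>"
proof (cases x)
  case (Pair f i)
  assume "x \<in> carrier W"
  then have "\<forall>k<p. f k \<in> carrier B" "i < p"
    using Pair mem_carrier_W by auto
  moreover have "((p - i) mod p + i) mod p = 0"
    using \<open>i < p\<close> by (simp add: mod_add_left_eq)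
  ultimately show ?thesis
    using Pair by (auto simp: inv_W_def mult_W one_W fun_eq_iff rot_rot mod_add_left_eq)
qed

lemma group_W: "group W"
proof (rule groupI)
  fix x y z
  assume "x \<in> carrier W" "y \<in> carrier W" "z \<in> carrier W"
  then show "x \<otimes>\<^bsub>W\<^esub> y \<otimes>\<^bsub>W\<^esub> z = x \<otimes>\<^bsub>W\<^esub> (y \<otimes>\<^bsub>W\<^esub> z)"
    by (cases x; cases y; cases z)
      (auto simp: mem_carrier_W mult_W fun_eq_iff rot_rot m_assoc mod_add_left_eq mod_add_right_eq add.assoc)
next
  fix x
  assume "x \<in> carrier W"
  then show "\<exists>y \<in> carrier W. y \<otimes>\<^bsub>W\<^esub> x = \<one>\<^bsub>W\<^esub>"
    using inv_W_closed inv_W_l_inv by blast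
qed (use p_pos in \<open>auto simp: mem_carrier_W mult_W one_W fun_eq_iff\<close>)

lemma inv_W_eq: "x \<in> carrier W \<Longrightarrow> inv\<^bsub>W\<^esub> x = inv_W x"
  by (simp add: group.inv_equality[OF group_W] inv_W_l_inv inv_W_closed)

lemma commutator_W_base:
  assumes "(u, i) \<in> carrier W" "(v, 0) \<in> carrier W"
  shows "commutator W (u, i) (v, 0) =
    (\<lambda>k. if k < p then u k \<otimes> v (rot i k) \<otimes> inv (u k) \<otimes> inv (v k) else undefined, 0)"
proof -
  have "i < p" "\<forall>k<p. u k \<in> carrier B" "\<forall>k<p. v k \<in> carrier B"
    using assms mem_carrier_W by auto
  moreover have "(i + (p - i) mod p) mod p = 0"
    using \<open>i < p\<close> by (simp add: mod_add_right_eq)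
  ultimately show ?thesis
    using assms by (simp add: commutator_def inv_W_eq inv_W_def mult_W fun_eq_iff rot_inverse)
qed

lemma snd_hom_integer_mod_group: "(\<lambda>x. int (snd x)) \<in> hom W (integer_mod_group p)"
  using p_pos by (auto simp: hom_def mem_carrier_W carrier_integer_mod_group mult_W zmod_int)

lemma base_finprod_hom:
  assumes "comm_group A" "\<phi> \<in> hom B A"
  shows "(\<lambda>x. finprod A (\<phi> \<circ> fst x) {..<p}) \<in> hom W A"
proof -
  interpret A: comm_group A by (fact assms(1))
  have \<phi>_base: "\<phi> \<circ> f \<in> {..<p} \<rightarrow> carrier A" if "(f, i) \<in> carrier W" for f i
    using that assms(2) by (auto simp: mem_carrier_W hom_in_carrier)
  show ?thesis
  proof (rule homI)
    fix x
    assume "x \<in> carrier W"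
    then show "finprod A (\<phi> \<circ> fst x) {..<p} \<in> carrier A"
      using \<phi>_base by (cases x) auto
  next
    fix x y
    assume "x \<in> carrier W" "y \<in> carrier W"
    then obtain f i g j where xy: "x = (f, i)" "y = (g, j)" and i: "i < p"
      and f: "\<phi> \<circ> f \<in> {..<p} \<rightarrow> carrier A" and g: "\<phi> \<circ> g \<in> {..<p} \<rightarrow> carrier A"
      and fg: "\<forall>k<p. f k \<in> carrier B \<and> g k \<in> carrier B"
      using \<phi>_base by (cases x, cases y) (auto simp: mem_carrier_W)
    have "finprod A (\<phi> \<circ> fst (x \<otimes>\<^bsub>W\<^esub> y)) {..<p} =
        finprod A (\<lambda>k. \<phi> (f k) \<otimes>\<^bsub>A\<^esub> \<phi> (g (rot i k))) {..<p}"
      using f g fg assms(2) by (intro A.finprod_cong') (auto simp: xy mult_W hom_mult Pi_iff)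
    also have "\<dots> = finprod A (\<phi> \<circ> f) {..<p} \<otimes>\<^bsub>A\<^esub> finprod A (\<lambda>k. \<phi> (g (rot i k))) {..<p}"
      using f g by (simp add: Pi_iff comp_def)
    also have "finprod A (\<lambda>k. \<phi> (g (rot i k))) {..<p} = finprod A (\<lambda>k. \<phi> (g k)) (rot i ` {..<p})"
      using bij_betw_rot[OF i] g by (intro A.finprod_reindex[symmetric]) (auto simp: bij_betw_def)
    also have "rot i ` {..<p} = {..<p}"
      using bij_betw_rot[OF i] by (simp add: bij_betw_def)
    finally show "finprod A (\<phi> \<circ> fst (x \<otimes>\<^bsub>W\<^esub> y)) {..<p} =
        finprod A (\<phi> \<circ> fst x) {..<p} \<otimes>\<^bsub>A\<^esub> finprod A (\<phi> \<circ> fst y) {..<p}"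
      by (simp add: xy comp_def)
  qed
qed

lemma derived_W_memD:
  assumes "x \<in> derived W (carrier W)"
  shows "snd x = 0" and "ordered_prod B (fst x) p \<in> derived B (carrier B)"
proof -
  define D where "D = derived B (carrier B)"
  have D: "D \<lhd> B" "comm_group (B Mod D)"
    by (simp_all add: D_def derived_self_is_normal derived_quot_is_comm_group)
  then interpret coset: group_hom B "B Mod D" "\<lambda>a. D #> a"
    by (simp add: group_hom_def group_hom_axioms_def comm_group.axioms(2) normal.r_coset_hom_Mod)
  have x: "x \<in> carrier W"
    using assms group.derived_in_carrier[OF group_W] by blast
  have "int (snd x) = 0"
    using derived_subset_kernel[OF group_W _ snd_hom_integer_mod_group] assms p_pos
    by (auto simp: kernel_def group.group_comm_groupI)
  then show "snd x = 0"
    by simp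
  have "finprod (B Mod D) ((\<lambda>a. D #> a) \<circ> fst x) {..<p} = \<one>\<^bsub>B Mod D\<^esub>"
    using derived_subset_kernel[OF group_W D(2) base_finprod_hom[OF D(2) coset.homh]] assms
    by (auto simp: kernel_def)
  moreover have fst_x: "fst x \<in> {..<p} \<rightarrow> carrier B"
    using x by (cases x) (auto simp: mem_carrier_W)
  ultimately have "D #> ordered_prod B (fst x) p = D"
    using coset.ordered_prod_hom_finprod[OF D(2)] by simp
  then have "ordered_prod B (fst x) p \<in> D"
    by (rule coset_join1[OF _ ordered_prod_closed[OF fst_x] normal_imp_subgroup[OF D(1)]])
  then show "ordered_prod B (fst x) p \<in> derived B (carrier B)"
    by (simp add: D_def)
qed

definition coord_emb :: "nat \<Rightarrow> 'a \<Rightarrow> (nat \<Rightarrow> 'a) \<times> nat" where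
  "coord_emb j x = (\<lambda>k. if k < p then (if k = j then x else \<one>) else undefined, 0)"

lemma group_hom_coord_emb: "group_hom B W (coord_emb j)"
  using p_pos
  by (auto simp: group_hom_def group_hom_axioms_def group_W is_group hom_def coord_emb_def
      mem_carrier_W mult_W fun_eq_iff)

lemma base_elem_is_commutator:
  assumes hW: "(h, 0) \<in> carrier W" and a: "a \<in> carrier B" and b: "b \<in> carrier B"
    and prod_h: "ordered_prod B h p = commutator B a b"
  obtains X Y where "X \<in> carrier W" "Y \<in> carrier W" "commutator W X Y = (h, 0)"
proof -
  have h: "h \<in> {..<p} \<rightarrow> carrier B" "\<forall>k\<ge>p. h k = undefined"
    using hW by (auto simp: mem_carrier_W)
  obtain v where v: "v \<in> {..<p} \<rightarrow> carrier B"
    and v_0: "a \<otimes> v (p - 1) \<otimes> inv a \<otimes> inv (v 0) = h 0"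
    and v_Suc: "\<And>k. 0 < k \<Longrightarrow> k < p \<Longrightarrow> v (k - 1) \<otimes> inv (v k) = h k"
    using cyclic_commutator_system_solvable[OF p_pos h(1) a b prod_h] by blast
  define u where "u k = (if k < p then (if k = 0 then a else \<one>) else undefined)" for k
  define r where "r = 1 mod p" \<comment> \<open>the generator of \<open>C\<^sub>p\<close>, which is \<open>0\<close> when \<open>p = 1\<close>\<close>
  have rot_r: "rot r k = (if k = 0 then p - 1 else k - 1)" if "k < p" for k
    using rot_one[OF that] by (simp add: r_def)
  have X: "(u, r) \<in> carrier W" and Y: "(restrict v {..<p}, 0) \<in> carrier W"
    using a v p_pos by (auto simp: mem_carrier_W u_def r_def)
  have "commutator W (u, r) (restrict v {..<p}, 0) = (h, 0)"
    using v v_0 v_Suc h(2) a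
    by (auto simp: commutator_W_base[OF X Y] fun_eq_iff rot_r u_def Pi_iff)
  with X Y show ?thesis
    by (rule that)
qed

lemma derived_W_prod_of_comms:
  assumes derived_B: "\<forall>x \<in> derived B (carrier B). prod_of_comms B n x"
    and g: "g \<in> derived W (carrier W)"
  shows "prod_of_comms W (max 1 n) g"
proof -
  obtain f where g_eq: "g = (f, 0)"
    using derived_W_memD(1)[OF g] by (cases g) simp
  have "g \<in> carrier W"
    using g group.derived_in_carrier[OF group_W] by blast
  then have f: "f \<in> {..<p} \<rightarrow> carrier B" "\<forall>k\<ge>p. f k = undefined"
    by (auto simp: g_eq mem_carrier_W)
  have "prod_of_comms B n (ordered_prod B f p)"
    using derived_W_memD(2)[OF g] derived_B by (simp add: g_eq)
  then obtain a b c where a: "a \<in> carrier B" and b: "b \<in> carrier B"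
    and c: "prod_of_comms B (n - 1) c" and prod_f: "ordered_prod B f p = commutator B a b \<otimes> c"
    by (rule prod_of_comms_split)
  have c_closed: "c \<in> carrier B"
    using c comm_prod_closed by (auto simp: prod_of_comms_def)
  define h where "h = f(p - 1 := f (p - 1) \<otimes> inv c)"
  have hW: "(h, 0) \<in> carrier W"
    using f c_closed p_pos by (auto simp: h_def mem_carrier_W Pi_iff)
  have "ordered_prod B h p = ordered_prod B f p \<otimes> inv c"
    using ordered_prod_update_last[of f "p - 1" "inv c"] f c_closed p_pos
    by (simp add: h_def Pi_iff)
  also have "\<dots> = commutator B a b"
    using a b c_closed by (simp add: prod_f m_assoc)
  finally obtain X Y where XY: "X \<in> carrier W" "Y \<in> carrier W" "commutator W X Y = (h, 0)"
    using base_elem_is_commutator[OF hW a b] by blast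
  have "g = (h, 0) \<otimes>\<^bsub>W\<^esub> coord_emb (p - 1) c"
    using f c_closed by (auto simp: g_eq h_def coord_emb_def mult_W fun_eq_iff m_assoc Pi_iff)
  moreover have "prod_of_comms W (n - 1) (coord_emb (p - 1) c)"
    using c group_hom.prod_of_comms_image[OF group_hom_coord_emb] by blast
  ultimately have "prod_of_comms W (Suc (n - 1)) g"
    using XY prod_of_comms_commutator_mult by metis
  then show ?thesis
    by (rule prod_of_comms_mono) simp
qed

end

theorem lemma4:
  fixes B :: "('a, 'b) monoid_scheme" and p :: nat
  assumes "group B" and "p \<ge> 2"
  shows "comm_width (wreath_Cp B p) \<le> max 1 (comm_width B)"
proof (cases "comm_width B")
  case infinity
  then show ?thesis
    by simp
next
  case (enat n)
  interpret wreath B p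
    using assms by (simp add: wreath_def wreath_axioms_def)
  have "\<forall>x \<in> derived B (carrier B). prod_of_comms B n x"
    using comm_width_le_enat_iff[of B n] enat by simp
  then have "comm_width W \<le> enat (max 1 n)"
    unfolding comm_width_le_enat_iff using derived_W_prod_of_comms by blast
  then show ?thesis
    using enat by (simp add: one_enat_def)
qed

end
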